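(* Let $S$ be a set of $k$ vertices carrying a $d$-regular bipartite graph with adjacency matrix $A|_{S\times S}$, where $d=\gamma pk$, $\gamma\ge1/2$ and $p\ge5\left(\frac{\log k}{\gamma^4k}\right)^{1/6}$. Let $\tau\ge d/2$, let $\mathbf v^{(1)},\dots,\mathbf v^{(L)}$ ($L=L_{-\tau}\ge1$) be orthonormal eigenvectors of $A|_{S\times S}$ spanning the eigenspaces with eigenvalue $\le-\tau$, and let $\mathbf w^{(i)}$, $i\in S$, be the spectral embedding vectors. Let $N\subseteq S$ be a random subset containing each $i\in S$ independently with probability $p$ (e.g. $N=N(j)\cap S$ for fixed $j\in V\setminus S$). Then for an arbitrary unit vector $\mathbf y\in\mathbb R^L$, with probability at least $1-O(1/k^4)$, $$\sum_{i\in N}\langle\mathbf y,\mathbf w^{(i)}\rangle^2\ge \frac p2.$$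
   Context: Spectral embedding: let $W$ be the $L\times k$ matrix whose rows are $\mathbf v^{(1)},\dots,\mathbf v^{(L)}$ (indexed by $S$); for $i\in S$, $\mathbf w^{(i)}\in\mathbb R^L$ is the $i$-th column of $W$, i.e. $w^{(i)}_r=v^{(r)}_i$. *)

theory Defs
  imports Complex_Main
begin

definition adj :: "(nat \<Rightarrow> nat \<Rightarrow> bool) \<Rightarrow> nat \<Rightarrow> nat \<Rightarrow> real" where
  "adj E i j = (if E i j then 1 else 0)"

definition simple_graph_on :: "nat set \<Rightarrow> (nat \<Rightarrow> nat \<Rightarrow> bool) \<Rightarrow> bool" where
  "simple_graph_on S E \<longleftrightarrow> (\<forall>i j. E i j \<longrightarrow> i \<in> S \<and> j \<in> S) \<and>
     (\<forall>i j. E i j \<longrightarrow> E j i) \<and> (\<forall>i. \<not> E i i)"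

definition bipartite_on :: "nat set \<Rightarrow> (nat \<Rightarrow> nat \<Rightarrow> bool) \<Rightarrow> bool" where
  "bipartite_on S E \<longleftrightarrow> (\<exists>X \<subseteq> S. \<forall>i\<in>S. \<forall>j\<in>S. E i j \<longrightarrow> (i \<in> X \<longleftrightarrow> j \<notin> X))"

definition regular_on :: "nat set \<Rightarrow> (nat \<Rightarrow> nat \<Rightarrow> bool) \<Rightarrow> nat \<Rightarrow> bool" where
  "regular_on S E d \<longleftrightarrow> (\<forall>i\<in>S. card {j\<in>S. E i j} = d)"

definition is_eigvec_on :: "nat set \<Rightarrow> (nat \<Rightarrow> nat \<Rightarrow> real) \<Rightarrow> real \<Rightarrow> (nat \<Rightarrow> real) \<Rightarrow> bool" where
  "is_eigvec_on S M \<mu> x \<longleftrightarrow> (\<exists>i\<in>S. x i \<noteq> 0) \<and> (\<forall>i\<in>S. (\<Sum>j\<in>S. M i j * x j) = \<mu> * x i)"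

text \<open>Probability that a random subset N of S, containing each element independently
  with probability p, satisfies P (product Bernoulli measure).\<close>
definition subset_prob :: "real \<Rightarrow> nat set \<Rightarrow> (nat set \<Rightarrow> bool) \<Rightarrow> real" where
  "subset_prob p S P = (\<Sum>N\<in>Pow S. if P N then p ^ card N * (1 - p) ^ (card S - card N) else 0)"

end

theory Submission
  imports Defs "HOL-Analysis.Convex"
begin

text \<open>Write \<open>a i = \<langle>y, w\<^sub>i\<rangle>\<^sup>2\<close>; by orthonormality these weights sum to \<open>1\<close>. Row \<open>i\<close> of the
  eigenvalue equations together with Bessel's inequality gives \<open>\<tau>\<^sup>2 \<parallel>w\<^sub>i\<parallel>\<^sup>2 \<le> deg i = d\<close>,
  so the embedding is delocalized: \<open>a i \<le> 4 / d\<close>. A Chernoff bound for a weighted sum of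
  independent Bernoulli(\<open>p\<close>) indicators with such small weights bounds the probability of
  \<open>\<Sum>i\<in>N. a i < p / 2\<close> by \<open>exp (- p d / 48)\<close>, and the lower bound on \<open>p\<close> gives
  \<open>p d \<ge> 15625 ln k\<close>, so this is at most \<open>1 / k\<^sup>4\<close>.\<close>

lemma sum_Pow_weight_prod:
  fixes p :: real
  assumes "finite S"
  shows "(\<Sum>N\<in>Pow S. p ^ card N * (1 - p) ^ (card S - card N) * (\<Prod>i\<in>N. f i))
    = (\<Prod>i\<in>S. 1 - p + p * f i)"
proof -
  have "(\<Prod>i\<in>S. 1 - p + p * f i) = (\<Prod>i\<in>S. p * f i + (1 - p))"
    by (simp add: algebra_simps)
  also have "\<dots> = (\<Sum>N\<in>Pow S. (\<Prod>i\<in>N. p * f i) * (\<Prod>i\<in>S - N. 1 - p))"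
    by (rule prod_add[OF assms])
  also have "\<dots> = (\<Sum>N\<in>Pow S. p ^ card N * (1 - p) ^ (card S - card N) * (\<Prod>i\<in>N. f i))"
  proof (rule sum.cong)
    fix N assume "N \<in> Pow S"
    then have "card (S - N) = card S - card N"
      using assms by (auto intro: card_Diff_subset finite_subset)
    then show "(\<Prod>i\<in>N. p * f i) * (\<Prod>i\<in>S - N. 1 - p) = p ^ card N * (1 - p) ^ (card S - card N) * (\<Prod>i\<in>N. f i)"
      by (simp add: prod.distrib)
  qed simp
  finally show ?thesis ..
qed

lemma subset_prob_nonneg:
  assumes "0 \<le> p" "p \<le> 1"
  shows "0 \<le> subset_prob p S P"
  unfolding subset_prob_def using assms by (intro sum_nonneg) auto

lemma subset_prob_add_compl:
  assumes "finite S"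
  shows "subset_prob p S P + subset_prob p S (\<lambda>N. \<not> P N) = 1"
proof -
  have "subset_prob p S P + subset_prob p S (\<lambda>N. \<not> P N)
      = (\<Sum>N\<in>Pow S. p ^ card N * (1 - p) ^ (card S - card N) * (\<Prod>i\<in>N. 1))"
    unfolding subset_prob_def sum.distrib[symmetric] by (rule sum.cong) auto
  also have "\<dots> = 1"
    by (simp only: sum_Pow_weight_prod[OF assms]) simp
  finally show ?thesis .
qed

lemma subset_prob_sum_less_le:
  fixes a :: "nat \<Rightarrow> real"
  assumes "finite S" "0 \<le> p" "p \<le> 1" "0 \<le> t"
  shows "subset_prob p S (\<lambda>N. (\<Sum>i\<in>N. a i) < c)
    \<le> exp (t * c) * (\<Prod>i\<in>S. 1 - p + p * exp (- t * a i))"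
proof -
  define w where "w N = p ^ card N * (1 - p) ^ (card S - card N)" for N :: "nat set"
  have "subset_prob p S (\<lambda>N. (\<Sum>i\<in>N. a i) < c)
      \<le> (\<Sum>N\<in>Pow S. w N * exp (t * (c - (\<Sum>i\<in>N. a i))))"
    unfolding subset_prob_def w_def[symmetric]
  proof (rule sum_mono)
    fix N
    have "0 \<le> w N" unfolding w_def using assms by simp
    moreover have "(\<Sum>i\<in>N. a i) < c \<Longrightarrow> 1 \<le> exp (t * (c - (\<Sum>i\<in>N. a i)))"
      using assms by simp
    ultimately show "(if (\<Sum>i\<in>N. a i) < c then w N else 0) \<le> w N * exp (t * (c - (\<Sum>i\<in>N. a i)))"
      using mult_left_mono[of 1 "exp (t * (c - (\<Sum>i\<in>N. a i)))" "w N"] by auto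
  qed
  also have "\<dots> = exp (t * c) * (\<Sum>N\<in>Pow S. w N * (\<Prod>i\<in>N. exp (- t * a i)))"
    unfolding sum_distrib_left
  proof (rule sum.cong)
    fix N assume "N \<in> Pow S"
    then have "finite N" using assms(1) finite_subset by auto
    then have "(\<Prod>i\<in>N. exp (- t * a i)) = exp (- (t * (\<Sum>i\<in>N. a i)))"
      by (simp add: exp_sum[symmetric] sum_distrib_left sum_negf)
    then show "w N * exp (t * (c - (\<Sum>i\<in>N. a i))) = exp (t * c) * (w N * (\<Prod>i\<in>N. exp (- t * a i)))"
      by (simp add: right_diff_distrib exp_diff exp_minus field_simps)
  qed simp
  also have "\<dots> = exp (t * c) * (\<Prod>i\<in>S. 1 - p + p * exp (- t * a i))"
    unfolding w_def by (simp only: sum_Pow_weight_prod[OF assms(1)])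
  finally show ?thesis .
qed

lemma one_minus_add_mult_exp_le:
  fixes p s :: real
  assumes "0 \<le> p" "p \<le> 1" "0 \<le> s" "s \<le> 1/3"
  shows "1 - p + p * exp (- s) \<le> exp (- (3/4 * p * s))"
proof -
  have "exp (- s) \<le> 1 / (1 + s)"
    using exp_ge_add_one_self[of s] assms by (simp add: exp_minus' divide_left_mono)
  also have "\<dots> \<le> 1 - 3/4 * s"
  proof -
    have "(1 - 3/4 * s) * (1 + s) = 1 + s * (1 - 3 * s) / 4"
      by (simp add: field_simps)
    moreover have "0 \<le> s * (1 - 3 * s)"
      using assms by simp
    ultimately have "1 \<le> (1 - 3/4 * s) * (1 + s)"
      by linarith
    then show ?thesis using assms by (simp add: pos_divide_le_eq)
  qed
  finally have "p * exp (- s) \<le> p * (1 - 3/4 * s)"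
    using assms by (intro mult_left_mono) auto
  then have "1 - p + p * exp (- s) \<le> 1 + (- (3/4 * p * s))"
    by (simp add: algebra_simps)
  also have "\<dots> \<le> exp (- (3/4 * p * s))" by (rule exp_ge_add_one_self)
  finally show ?thesis .
qed

lemma subset_prob_weighted_sum_ge:
  fixes a :: "nat \<Rightarrow> real"
  assumes fin: "finite S" and p: "0 \<le> p" "p \<le> 1" and t: "0 \<le> t"
    and a_nonneg: "\<And>i. i \<in> S \<Longrightarrow> 0 \<le> a i"
    and a_small: "\<And>i. i \<in> S \<Longrightarrow> t * a i \<le> 1/3"
    and a_sum: "(\<Sum>i\<in>S. a i) = 1"
  shows "1 - exp (- (p * t / 4)) \<le> subset_prob p S (\<lambda>N. p / 2 \<le> (\<Sum>i\<in>N. a i))"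
proof -
  have "(\<Prod>i\<in>S. 1 - p + p * exp (- t * a i)) \<le> (\<Prod>i\<in>S. exp (- (3/4 * p * (t * a i))))"
  proof (rule prod_mono)
    fix i assume i: "i \<in> S"
    have "0 \<le> 1 - p + p * exp (- t * a i)" using p by simp
    with one_minus_add_mult_exp_le[OF p, of "t * a i"] show
      "0 \<le> 1 - p + p * exp (- t * a i) \<and> 1 - p + p * exp (- t * a i) \<le> exp (- (3/4 * p * (t * a i)))"
      using a_small[OF i] a_nonneg[OF i] t by simp
  qed
  also have "\<dots> = exp (- (3/4 * p * t) * (\<Sum>i\<in>S. a i))"
    by (simp add: exp_sum[OF fin, symmetric] sum_distrib_left mult.assoc)
  also have "\<dots> = exp (- (3/4 * p * t))"
    by (simp add: a_sum)
  finally have "subset_prob p S (\<lambda>N. (\<Sum>i\<in>N. a i) < p / 2) \<le> exp (t * (p / 2)) * exp (- (3/4 * p * t))"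
    using subset_prob_sum_less_le[OF fin p t, of a "p / 2"] by (simp add: order_trans)
  also have "\<dots> = exp (- (p * t / 4))" by (simp add: exp_add[symmetric] algebra_simps)
  finally show ?thesis
    using subset_prob_add_compl[OF fin, of p "\<lambda>N. p / 2 \<le> (\<Sum>i\<in>N. a i)"] by (simp add: not_le)
qed

lemma orthonormal_sum_sq_comb:
  fixes v :: "nat \<Rightarrow> nat \<Rightarrow> real"
  assumes "\<forall>r<L. \<forall>s<L. (\<Sum>i\<in>S. v r i * v s i) = (if r = s then 1 else 0)"
  shows "(\<Sum>i\<in>S. (\<Sum>r<L. c r * v r i)\<^sup>2) = (\<Sum>r<L. (c r)\<^sup>2)"
proof -
  have "(\<Sum>i\<in>S. (\<Sum>r<L. c r * v r i)\<^sup>2) = (\<Sum>i\<in>S. \<Sum>r<L. \<Sum>s<L. c r * c s * (v r i * v s i))"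
    by (simp add: power2_eq_square sum_product algebra_simps)
  also have "\<dots> = (\<Sum>r<L. \<Sum>s<L. c r * c s * (\<Sum>i\<in>S. v r i * v s i))"
    by (simp add: sum_distrib_left sum.swap[of _ S])
  also have "\<dots> = (\<Sum>r<L. \<Sum>s<L. if r = s then c r * c s else 0)"
    using assms by (intro sum.cong refl) auto
  also have "\<dots> = (\<Sum>r<L. (c r)\<^sup>2)"
    by (simp add: power2_eq_square)
  finally show ?thesis .
qed

lemma orthonormal_nonempty:
  fixes v :: "nat \<Rightarrow> nat \<Rightarrow> real"
  assumes "\<forall>r<L. \<forall>s<L. (\<Sum>i\<in>S. v r i * v s i) = (if r = s then 1 else 0)" and "1 \<le> L"
  shows "S \<noteq> {}"
  using assms(1)[rule_format, of 0 0] assms(2) by auto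

lemma bessel_inequality:
  fixes v :: "nat \<Rightarrow> nat \<Rightarrow> real"
  assumes "\<forall>r<L. \<forall>s<L. (\<Sum>i\<in>S. v r i * v s i) = (if r = s then 1 else 0)"
  shows "(\<Sum>r<L. (\<Sum>j\<in>S. x j * v r j)\<^sup>2) \<le> (\<Sum>j\<in>S. (x j)\<^sup>2)"
proof -
  define c where "c r = (\<Sum>j\<in>S. x j * v r j)" for r
  have "(\<Sum>j\<in>S. x j * (\<Sum>r<L. c r * v r j)) = (\<Sum>r<L. \<Sum>j\<in>S. c r * (x j * v r j))"
    by (simp add: sum_distrib_left mult.left_commute sum.swap[of _ S])
  also have "\<dots> = (\<Sum>r<L. (c r)\<^sup>2)"
    by (simp add: sum_distrib_left[symmetric] c_def power2_eq_square)
  finally have proj: "(\<Sum>j\<in>S. x j * (\<Sum>r<L. c r * v r j)) = (\<Sum>r<L. (c r)\<^sup>2)" .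
  have "0 \<le> (\<Sum>j\<in>S. (x j - (\<Sum>r<L. c r * v r j))\<^sup>2)"
    by (simp add: sum_nonneg)
  also have "\<dots> = (\<Sum>j\<in>S. (x j)\<^sup>2) - 2 * (\<Sum>j\<in>S. x j * (\<Sum>r<L. c r * v r j))
      + (\<Sum>j\<in>S. (\<Sum>r<L. c r * v r j)\<^sup>2)"
    by (simp add: power2_diff sum.distrib sum_subtractf sum_distrib_left mult.assoc)
  also have "\<dots> = (\<Sum>j\<in>S. (x j)\<^sup>2) - (\<Sum>r<L. (c r)\<^sup>2)"
    by (simp only: proj orthonormal_sum_sq_comb[OF assms])
  finally show ?thesis unfolding c_def by simp
qed

lemma eigvec_coord_sq_sum_le:
  fixes M :: "nat \<Rightarrow> nat \<Rightarrow> real" and v :: "nat \<Rightarrow> nat \<Rightarrow> real"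
  assumes orth: "\<forall>r<L. \<forall>s<L. (\<Sum>i\<in>S. v r i * v s i) = (if r = s then 1 else 0)"
    and eig: "\<And>r. r < L \<Longrightarrow> is_eigvec_on S M (\<mu> r) (v r)"
    and gap: "\<And>r. r < L \<Longrightarrow> \<theta> \<le> \<bar>\<mu> r\<bar>" and "0 \<le> \<theta>" and i: "i \<in> S"
  shows "\<theta>\<^sup>2 * (\<Sum>r<L. (v r i)\<^sup>2) \<le> (\<Sum>j\<in>S. (M i j)\<^sup>2)"
proof -
  have "\<theta>\<^sup>2 \<le> (\<mu> r)\<^sup>2" if "r < L" for r
    using power_mono[OF gap[OF that] \<open>0 \<le> \<theta>\<close>, of 2] by simp
  then have "\<theta>\<^sup>2 * (\<Sum>r<L. (v r i)\<^sup>2) \<le> (\<Sum>r<L. (\<mu> r * v r i)\<^sup>2)"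
    unfolding sum_distrib_left power_mult_distrib by (intro sum_mono mult_right_mono) auto
  also have "\<dots> = (\<Sum>r<L. (\<Sum>j\<in>S. M i j * v r j)\<^sup>2)"
    using eig i unfolding is_eigvec_on_def by simp
  also have "\<dots> \<le> (\<Sum>j\<in>S. (M i j)\<^sup>2)"
    by (rule bessel_inequality[OF orth])
  finally show ?thesis .
qed

lemma adj_row_sum_sq:
  assumes "finite S"
  shows "(\<Sum>j\<in>S. (adj E i j)\<^sup>2) = real (card {j\<in>S. E i j})"
proof -
  have "(\<Sum>j\<in>S. (adj E i j)\<^sup>2) = (\<Sum>j\<in>S. if E i j then 1 else 0)"
    by (rule sum.cong) (auto simp: adj_def)
  also have "\<dots> = real (card (S \<inter> Collect (E i)))"
    using assms by (simp add: sum.If_cases)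
  also have "S \<inter> Collect (E i) = {j\<in>S. E i j}"
    by auto
  finally show ?thesis .
qed

lemma regular_degree_le_card:
  assumes "finite S" "S \<noteq> {}" "regular_on S E d"
  shows "d \<le> card S"
proof -
  obtain i where "i \<in> S" using assms(2) by blast
  then have "d = card {j\<in>S. E i j}" using assms(3) unfolding regular_on_def by simp
  also have "\<dots> \<le> card S" using assms(1) by (intro card_mono) auto
  finally show ?thesis .
qed

lemma density_lower_bound:
  fixes k \<gamma> p :: real
  assumes "1 < k" "0 < \<gamma>" "0 \<le> p" "p \<le> 1" and gp: "\<gamma> * p \<le> 1"
    and p_lower: "5 * (ln k / (\<gamma> ^ 4 * k)) powr (1/6) \<le> p"
  shows "15625 * ln k \<le> p * (\<gamma> * p * k)"
proof -
  define x where "x = ln k / (\<gamma> ^ 4 * k)"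
  have "0 < x" unfolding x_def using assms by simp
  then have "(x powr (1/6)) ^ 6 = x"
    by (simp flip: powr_realpow add: powr_powr)
  moreover have "(5 * x powr (1/6)) ^ 6 \<le> p ^ 6"
    using p_lower unfolding x_def[symmetric] by (intro power_mono) auto
  ultimately have "15625 * x \<le> p ^ 6"
    by (simp add: power_mult_distrib)
  then have "15625 * ln k \<le> p ^ 6 * (\<gamma> ^ 4 * k)"
    unfolding x_def using assms by (simp add: pos_divide_le_eq mult.assoc)
  also have "\<dots> = (\<gamma> * p) ^ 3 * p * (p * (\<gamma> * p * k))"
    by (simp add: algebra_simps power_numeral_reduce)
  also have "\<dots> \<le> p * (\<gamma> * p * k)"
  proof (rule mult_left_le_one_le)
    show "(\<gamma> * p) ^ 3 * p \<le> 1"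
      using assms by (intro mult_le_one[OF power_le_one[OF _ gp]]) auto
  qed (use assms in auto)
  finally show ?thesis .
qed


lemma exp_neg_le_inverse_power:
  fixes k x :: real
  assumes "0 < k" "real n * ln k \<le> x"
  shows "exp (- x) \<le> 1 / k ^ n"
proof -
  have "exp (- x) \<le> exp (- ln (k ^ n))"
    using assms by (simp add: ln_realpow)
  also have "\<dots> = 1 / k ^ n"
    using assms by (simp add: exp_minus')
  finally show ?thesis .
qed

lemma spectral_embedding_coord_sq_le:
  fixes v :: "nat \<Rightarrow> nat \<Rightarrow> real" and y :: "nat \<Rightarrow> real"
  assumes fin: "finite S" and reg: "regular_on S E d" and \<tau>: "0 < \<tau>" and i: "i \<in> S"
    and orth: "\<forall>r<L. \<forall>s<L. (\<Sum>i\<in>S. v r i * v s i) = (if r = s then 1 else 0)"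
    and eig: "\<forall>r<L. \<exists>\<mu>. \<mu> \<le> - \<tau> \<and> is_eigvec_on S (adj E) \<mu> (v r)"
    and y: "(\<Sum>r<L. (y r)\<^sup>2) = 1"
  shows "(\<Sum>r<L. y r * v r i)\<^sup>2 \<le> real d / \<tau>\<^sup>2"
proof -
  obtain \<mu> where \<mu>: "\<And>r. r < L \<Longrightarrow> \<mu> r \<le> - \<tau> \<and> is_eigvec_on S (adj E) (\<mu> r) (v r)"
    using eig by metis
  have "\<tau> \<le> \<bar>\<mu> r\<bar>" if "r < L" for r
    using \<mu>[OF that] abs_ge_minus_self[of "\<mu> r"] by linarith
  then have "\<tau>\<^sup>2 * (\<Sum>r<L. (v r i)\<^sup>2) \<le> (\<Sum>j\<in>S. (adj E i j)\<^sup>2)"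
    using \<mu> \<tau> by (intro eigvec_coord_sq_sum_le[OF orth _ _ _ i]) auto
  also have "\<dots> = real d"
    using adj_row_sum_sq[OF fin] reg i unfolding regular_on_def by simp
  finally have "(\<Sum>r<L. (v r i)\<^sup>2) \<le> real d / \<tau>\<^sup>2"
    using \<tau> by (simp add: le_divide_eq mult.commute)
  moreover have "(\<Sum>r<L. y r * v r i)\<^sup>2 \<le> (\<Sum>r<L. (v r i)\<^sup>2)"
    using Cauchy_Schwarz_ineq_sum[of y "\<lambda>r. v r i" "{..<L}"] y by simp
  ultimately show ?thesis by linarith
qed

lemma spectral_embedding_mass_on_random_subset:
  fixes v :: "nat \<Rightarrow> nat \<Rightarrow> real" and y :: "nat \<Rightarrow> real"
  assumes fin: "finite S" and k: "card S = k" and reg: "regular_on S E d"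
    and d: "real d = \<gamma> * p * real k" and \<gamma>: "0 < \<gamma>" and p: "0 \<le> p" "p \<le> 1"
    and p_lower: "5 * (ln (real k) / (\<gamma> ^ 4 * real k)) powr (1/6) \<le> p"
    and \<tau>: "real d / 2 \<le> \<tau>" and L: "1 \<le> L"
    and orth: "\<forall>r<L. \<forall>s<L. (\<Sum>i\<in>S. v r i * v s i) = (if r = s then 1 else 0)"
    and eig: "\<forall>r<L. \<exists>\<mu>. \<mu> \<le> - \<tau> \<and> is_eigvec_on S (adj E) \<mu> (v r)"
    and y: "(\<Sum>r<L. (y r)\<^sup>2) = 1"
  shows "1 - 1 / real k ^ 4 \<le> subset_prob p S (\<lambda>N. p / 2 \<le> (\<Sum>i\<in>N. (\<Sum>r<L. y r * v r i)\<^sup>2))"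
proof -
  have "S \<noteq> {}"
    by (rule orthonormal_nonempty[OF orth L])
  then have "0 < card S"
    using fin by (simp add: card_gt_0_iff)
  then have "1 \<le> k"
    using k by simp
  show ?thesis
  proof (cases "k = 1")
    case True
    then show ?thesis using subset_prob_nonneg[OF p] by simp
  next
    case False
    with \<open>1 \<le> k\<close> have k_gt: "1 < real k" by simp
    have "\<gamma> * p * real k \<le> 1 * real k"
      using regular_degree_le_card[OF fin \<open>S \<noteq> {}\<close> reg] d k by simp
    then have "\<gamma> * p \<le> 1" using k_gt by simp
    then have pd: "15625 * ln (real k) \<le> p * real d"
      using density_lower_bound[OF k_gt \<gamma> p _ p_lower] d by simp
    then have "0 < p * real d"
      using ln_gt_zero[OF k_gt] by linarith
    then have d_pos: "0 < real d"
      by (simp add: zero_less_mult_iff)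
    define a where "a i = (\<Sum>r<L. y r * v r i)\<^sup>2" for i
    define t where "t = real d / 12"
    have "t * a i \<le> 1/3" if "i \<in> S" for i
    proof -
      have "a i \<le> real d / \<tau>\<^sup>2"
        unfolding a_def using d_pos \<tau> that
        by (intro spectral_embedding_coord_sq_le[OF fin reg _ that orth eig y]) simp
      also have "\<dots> \<le> real d / (real d / 2)\<^sup>2"
        using d_pos \<tau> by (intro divide_left_mono power_mono) auto
      finally show ?thesis
        unfolding t_def using d_pos by (simp add: power2_eq_square field_simps)
    qed
    moreover have "(\<Sum>i\<in>S. a i) = 1"
      unfolding a_def using orthonormal_sum_sq_comb[OF orth, of y] y by simp
    ultimately have tail: "1 - exp (- (p * t / 4)) \<le> subset_prob p S (\<lambda>N. p / 2 \<le> (\<Sum>i\<in>N. a i))"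
      using d_pos unfolding t_def by (intro subset_prob_weighted_sum_ge[OF fin p]) (auto simp: a_def)
    have "real 4 * ln (real k) \<le> p * t / 4"
      using pd ln_gt_zero[OF k_gt] unfolding t_def of_nat_numeral by linarith
    then have "exp (- (p * t / 4)) \<le> 1 / real k ^ 4"
      using k_gt by (intro exp_neg_le_inverse_power) auto
    with tail show ?thesis unfolding a_def by simp
  qed
qed

theorem lemma2p12:
  "\<exists>C::real. \<forall>(k::nat) (S::nat set) (E::nat \<Rightarrow> nat \<Rightarrow> bool) (d::nat) (\<gamma>::real) (p::real)
      (\<tau>::real) (L::nat) (v::nat \<Rightarrow> nat \<Rightarrow> real) (y::nat \<Rightarrow> real).
    finite S \<and> card S = k \<and>
    simple_graph_on S E \<and> bipartite_on S E \<and> regular_on S E d \<and>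
    real d = \<gamma> * p * real k \<and> \<gamma> \<ge> 1/2 \<and> 0 \<le> p \<and> p \<le> 1 \<and>
    p \<ge> 5 * (ln (real k) / (\<gamma> ^ 4 * real k)) powr (1/6) \<and>
    \<tau> \<ge> real d / 2 \<and> L \<ge> 1 \<and>
    (\<forall>r<L. \<forall>s<L. (\<Sum>i\<in>S. v r i * v s i) = (if r = s then 1 else 0)) \<and>
    (\<forall>r<L. \<exists>ev. ev \<le> - \<tau> \<and> is_eigvec_on S (adj E) ev (v r)) \<and>
    (\<forall>\<mu> x. \<mu> \<le> - \<tau> \<and> is_eigvec_on S (adj E) \<mu> x \<longrightarrow>
        (\<exists>c::nat \<Rightarrow> real. \<forall>i\<in>S. x i = (\<Sum>r<L. c r * v r i))) \<and>
    (\<Sum>r<L. (y r)\<^sup>2) = 1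
    \<longrightarrow> subset_prob p S (\<lambda>N. (\<Sum>i\<in>N. (\<Sum>r<L. y r * v r i)\<^sup>2) \<ge> p / 2)
        \<ge> 1 - C / real k ^ 4"
proof (intro exI[of _ 1] allI impI, elim conjE, goal_cases)
  case (1 k S E d \<gamma> p)
  then show ?case
    by (intro spectral_embedding_mass_on_random_subset[of S k E d \<gamma> p]) auto
qed
end
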